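(* There is an absolute constant $c>0$ such that for every integer $k\geq 2$, the largest number $N(k)$ of vertices of a connected integral circulant graph $G(n;S)$ of degree $k$ satisfies $$N(k)\leq \exp\left(c\sqrt{k\log\log(k+2)}\,\log k\right).$$
   Context: For an integer $n$ and a set $S\subseteq\{1,\dots,n-1\}$ such that $s\in S$ if and only if $n-s\in S$, the circulant graph $G(n;S)$ is the undirected graph on vertex set $\mathbb{Z}_n$ in which $i$ and $j$ are adjacent iff $i-j \bmod n\in S$; its degree is $\#S$. A graph is integral if all eigenvalues of its adjacency matrix are integers. *)

theory Defs
  imports Complex_Main "Jordan_Normal_Form.Char_Poly"
begin

definition circulant_set :: "nat \<Rightarrow> nat set \<Rightarrow> bool" where
  "circulant_set n S \<longleftrightarrow> S \<subseteq> {1..<n} \<and> (\<forall>s\<in>{1..<n}. s \<in> S \<longleftrightarrow> n - s \<in> S)"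

definition circ_adj :: "nat \<Rightarrow> nat set \<Rightarrow> nat \<Rightarrow> nat \<Rightarrow> bool" where
  "circ_adj n S i j \<longleftrightarrow> i < n \<and> j < n \<and> nat ((int i - int j) mod int n) \<in> S"

definition circ_adj_mat :: "nat \<Rightarrow> nat set \<Rightarrow> complex mat" where
  "circ_adj_mat n S = mat n n (\<lambda>(i,j). if circ_adj n S i j then 1 else 0)"

definition integral_circulant :: "nat \<Rightarrow> nat set \<Rightarrow> bool" where
  "integral_circulant n S \<longleftrightarrow> (\<forall>ev. eigenvalue (circ_adj_mat n S) ev \<longrightarrow> ev \<in> \<int>)"

definition connected_circulant :: "nat \<Rightarrow> nat set \<Rightarrow> bool" where
  "connected_circulant n S \<longleftrightarrow> (\<forall>i<n. \<forall>j<n. (circ_adj n S)\<^sup>*\<^sup>* i j)"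

end

(*
  The eigenvalues of G(n;S) are lambda_j = sum_{s in S} zeta^(j s), zeta = exp(2 pi i/n).
  The Frobenius congruence lambda_j^p = lambda_{pj} (mod p) in Z[zeta], descended to Z by a
  trace argument, shows that integral eigenvalues, which satisfy |lambda_j| <= k, are invariant
  under j -> p j for every prime p > 2k. By Fourier inversion, S is then invariant under
  multiplication by every N coprime to n all of whose prime factors exceed 2k; such N realise
  every unit modulo every divisor of n, so S is a union of the classes {t. gcd t n = g}, of
  sizes phi(n/g). Connectedness provides, for every prime p dividing n, an element of S prime
  to p. Hence every prime power p^e exactly dividing n satisfies p^e <= 2 phi(p^e) <= 2k, and
  the odd primes p dividing n satisfy sum (p - 1) <= k, so there are r = O(sqrt k) of them and
  n <= (2k)^(r+1) = exp(O(sqrt k log k)). Since log log (k+2) is bounded below by 1/5, this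
  gives the claim with c = 30.
*)
theory Submission
  imports Defs "HOL-Number_Theory.Number_Theory"
begin

definition zeta :: "nat \<Rightarrow> int \<Rightarrow> complex" where
  "zeta n m = cis (2 * pi * of_int m / of_nat n)"

lemma zeta_add: "zeta n (a + b) = zeta n a * zeta n b"
  by (simp add: zeta_def cis_mult add_divide_distrib ring_distribs)

lemma norm_zeta [simp]: "norm (zeta n a) = 1"
  by (simp add: zeta_def)

lemma zeta_power: "zeta n a ^ k = zeta n (a * int k)"
  by (simp add: zeta_def DeMoivre field_simps)

lemma zeta_eq_1_iff:
  assumes "n > 0"
  shows "zeta n a = 1 \<longleftrightarrow> int n dvd a"
proof
  assume "int n dvd a"
  then obtain m where "a = int n * m" by (auto elim: dvdE)
  then have "2 * pi * of_int a / of_nat n = 2 * pi * of_int m"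
    using assms by (simp add: field_simps)
  then show "zeta n a = 1" by (simp add: zeta_def cis_multiple_2pi)
next
  assume "zeta n a = 1"
  then have "cos (2 * pi * of_int a / of_nat n) = 1"
    unfolding zeta_def by (metis cis.sel(1) one_complex.sel(1))
  then obtain x where "2 * pi * of_int a / of_nat n = real_of_int x * 2 * pi"
    by (auto simp: cos_one_2pi_int)
  then have "real_of_int a = real_of_int x * real n"
    using assms by (simp add: field_simps)
  then have "a = x * int n" by (metis of_int_eq_iff of_int_mult of_int_of_nat_eq)
  then show "int n dvd a" by simp
qed

lemma zeta_root_of_unity: "n > 0 \<Longrightarrow> zeta n a ^ n = 1"
  by (simp add: zeta_power zeta_eq_1_iff)

lemma zeta_cong:
  assumes "n > 0" and "a mod int n = b mod int n"
  shows "zeta n a = zeta n b"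
proof -
  have "int n dvd a - b" using assms(2) by (simp add: mod_eq_dvd_iff)
  then have "zeta n (a - b) = 1" using assms(1) by (simp add: zeta_eq_1_iff)
  then show ?thesis using zeta_add[of n "a - b" b] by simp
qed

definition circ_eigenvalue :: "nat \<Rightarrow> nat set \<Rightarrow> int \<Rightarrow> complex" where
  "circ_eigenvalue n S j = (\<Sum>s\<in>S. zeta n (j * int s))"

lemma circ_eigenvalue_mod:
  assumes "n > 0"
  shows "circ_eigenvalue n S (j mod int n) = circ_eigenvalue n S j"
  unfolding circ_eigenvalue_def
  by (intro sum.cong refl zeta_cong[OF assms]) (simp add: mod_mult_left_eq)

lemma norm_circ_eigenvalue_le: "norm (circ_eigenvalue n S j) \<le> card S"
proof (cases "finite S")
  case True
  have "norm (circ_eigenvalue n S j) \<le> (\<Sum>s\<in>S. norm (zeta n (j * int s)))"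
    unfolding circ_eigenvalue_def by (rule norm_sum)
  then show ?thesis by simp
qed (simp add: circ_eigenvalue_def)

lemma sum_circ_row_reindex:
  fixes f :: "nat \<Rightarrow> 'a::comm_monoid_add"
  assumes n: "n > 0" and S: "S \<subseteq> {..<n}"
  shows "(\<Sum>t<n. if nat ((int i - int t) mod int n) \<in> S then f t else 0)
       = (\<Sum>s\<in>S. f (nat ((int i - int s) mod int n)))"
proof -
  define \<phi> where "\<phi> t = nat ((int i - int t) mod int n)" for t
  have \<phi>_lt: "\<phi> t < n" for t
    using n by (simp add: \<phi>_def nat_less_iff)
  have \<phi>_\<phi>: "\<phi> (\<phi> t) = t" if "t < n" for t
  proof -
    have "(int i - (int i - int t) mod int n) mod int n = int t mod int n"
      by (simp add: mod_diff_right_eq)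
    then show ?thesis using that n by (simp add: \<phi>_def)
  qed
  have "(\<Sum>t<n. if \<phi> t \<in> S then f t else 0) = (\<Sum>t\<in>{t\<in>{..<n}. \<phi> t \<in> S}. f t)"
    by (rule sum.inter_filter[symmetric]) simp
  also have "\<dots> = (\<Sum>s\<in>S. f (\<phi> s))"
    by (rule sum.reindex_bij_witness[of _ \<phi> \<phi>]) (use \<phi>_lt \<phi>_\<phi> S in auto)
  finally show ?thesis by (simp add: \<phi>_def)
qed

lemma eigenvalue_circ_adj_mat:
  assumes n: "n > 0" and S: "S \<subseteq> {..<n}"
  shows "eigenvalue (circ_adj_mat n S) (circ_eigenvalue n S j)"
proof -
  define v where "v = vec n (\<lambda>t. zeta n (- j * int t))"
  have "v $ 0 = 1" using n by (simp add: v_def zeta_def)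
  then have "v \<noteq> 0\<^sub>v n" using n by auto
  moreover have "circ_adj_mat n S *\<^sub>v v = circ_eigenvalue n S j \<cdot>\<^sub>v v"
  proof (rule eq_vecI)
    fix i assume "i < dim_vec (circ_eigenvalue n S j \<cdot>\<^sub>v v)"
    then have i: "i < n" by (simp add: v_def)
    have shift: "zeta n (- j * int (nat ((int i - int s) mod int n)))
        = zeta n (- j * int i) * zeta n (j * int s)" for s
    proof -
      have "(- j * ((int i - int s) mod int n)) mod int n = (- j * (int i - int s)) mod int n"
        by (rule mod_mult_right_eq)
      also have "- j * (int i - int s) = - j * int i + j * int s"
        by (simp add: algebra_simps)
      finally have "zeta n (- j * ((int i - int s) mod int n)) = zeta n (- j * int i + j * int s)"
        by (rule zeta_cong[OF n])
      then show ?thesis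
        using n zeta_add[of n "- j * int i" "j * int s"] by simp
    qed
    have "(circ_adj_mat n S *\<^sub>v v) $ i
        = (\<Sum>t = 0..<n. (if nat ((int i - int t) mod int n) \<in> S then 1 else 0) * zeta n (- j * int t))"
      using i by (simp add: circ_adj_mat_def v_def scalar_prod_def circ_adj_def row_def)
    also have "\<dots> = (\<Sum>t<n. if nat ((int i - int t) mod int n) \<in> S then zeta n (- j * int t) else 0)"
      unfolding atLeast0LessThan by (intro sum.cong) auto
    also have "\<dots> = (\<Sum>s\<in>S. zeta n (- j * int (nat ((int i - int s) mod int n))))"
      by (rule sum_circ_row_reindex[OF n S])
    also have "\<dots> = (\<Sum>s\<in>S. zeta n (- j * int i) * zeta n (j * int s))"
      by (rule sum.cong[OF refl shift])
    also have "\<dots> = (circ_eigenvalue n S j \<cdot>\<^sub>v v) $ i"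
      using i by (simp add: circ_eigenvalue_def v_def sum_distrib_left mult.commute)
    finally show "(circ_adj_mat n S *\<^sub>v v) $ i = (circ_eigenvalue n S j \<cdot>\<^sub>v v) $ i" .
  qed (simp add: circ_adj_mat_def v_def)
  ultimately have "eigenvector (circ_adj_mat n S) v (circ_eigenvalue n S j)"
    by (simp add: eigenvector_def circ_adj_mat_def v_def)
  then show ?thesis
    unfolding eigenvalue_def by blast
qed

lemma circ_eigenvalue_inversion:
  assumes n: "n > 0" and S: "S \<subseteq> {..<n}"
  shows "(\<Sum>j<n. circ_eigenvalue n S (int j) * zeta n (- (int j * x)))
       = (if nat (x mod int n) \<in> S then of_nat n else 0)"
proof -
  have geometric: "(\<Sum>j<n. zeta n (int s - x) ^ j) = (if s = nat (x mod int n) then of_nat n else 0)"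
    if "s \<in> S" for s
  proof -
    have "int n dvd int s - x \<longleftrightarrow> int s mod int n = x mod int n"
      by (simp add: mod_eq_dvd_iff)
    also have "\<dots> \<longleftrightarrow> s = nat (x mod int n)"
      using that S n by auto
    finally have "zeta n (int s - x) = 1 \<longleftrightarrow> s = nat (x mod int n)"
      using zeta_eq_1_iff[OF n] by simp
    then show ?thesis
      by (simp add: sum_gp_strict zeta_root_of_unity[OF n])
  qed
  have "circ_eigenvalue n S (int j) * zeta n (- (int j * x)) = (\<Sum>s\<in>S. zeta n (int s - x) ^ j)"
    for j
    unfolding circ_eigenvalue_def sum_distrib_right
    by (intro sum.cong refl) (simp add: zeta_add[symmetric] zeta_power algebra_simps)
  then have "(\<Sum>j<n. circ_eigenvalue n S (int j) * zeta n (- (int j * x)))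
      = (\<Sum>j<n. \<Sum>s\<in>S. zeta n (int s - x) ^ j)"
    by simp
  also have "\<dots> = (\<Sum>s\<in>S. \<Sum>j<n. zeta n (int s - x) ^ j)"
    by (rule sum.swap)
  also have "\<dots> = (\<Sum>s\<in>S. if s = nat (x mod int n) then of_nat n else 0)"
    using geometric by (rule sum.cong[OF refl])
  also have "\<dots> = (if nat (x mod int n) \<in> S then of_nat n else 0)"
    using finite_subset[OF S] by (simp add: sum.delta')
  finally show ?thesis .
qed

lemma power_add_prime:
  fixes a b :: "'a::comm_ring_1"
  assumes p: "prime p"
  shows "\<exists>r. (a + b) ^ p = a ^ p + b ^ p + of_nat p * r"
proof -
  have p0: "p > 0" using p prime_gt_0_nat by blast
  have middle: "of_nat (p choose k) * a ^ k * b ^ (p - k)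
      = of_nat p * (of_nat ((p choose k) div p) * a ^ k * b ^ (p - k))" if "k \<in> {1..<p}" for k
  proof -
    have "p dvd (p choose k)" using that p by (intro dvd_choose_prime) auto
    then have "(of_nat (p choose k) :: 'a) = of_nat p * of_nat ((p choose k) div p)"
      by (metis dvd_mult_div_cancel of_nat_mult)
    then show ?thesis by (simp add: mult.assoc)
  qed
  have "{..p} = insert p (insert 0 {1..<p})" using p0 by auto
  then have "(a + b) ^ p = a ^ p + b ^ p
      + (\<Sum>k\<in>{1..<p}. of_nat (p choose k) * a ^ k * b ^ (p - k))"
    using p0 by (simp add: binomial_ring add.assoc)
  also have "\<dots> = a ^ p + b ^ p
      + of_nat p * (\<Sum>k\<in>{1..<p}. of_nat ((p choose k) div p) * a ^ k * b ^ (p - k))"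
    by (simp add: middle sum_distrib_left)
  finally show ?thesis by blast
qed

lemma power_sum_prime:
  fixes f :: "'b \<Rightarrow> 'a::comm_ring_1"
  assumes p: "prime p" and S: "finite S"
  shows "\<exists>r. (\<Sum>s\<in>S. f s) ^ p = (\<Sum>s\<in>S. f s ^ p) + of_nat p * r"
  using S
proof (induction S rule: finite_induct)
  case empty
  show ?case using prime_gt_0_nat[OF p] by (intro exI[of _ 0]) (simp add: zero_power)
next
  case (insert x F)
  then obtain r where r: "(\<Sum>s\<in>F. f s) ^ p = (\<Sum>s\<in>F. f s ^ p) + of_nat p * r"
    by blast
  obtain r' where "(f x + (\<Sum>s\<in>F. f s)) ^ p = f x ^ p + (\<Sum>s\<in>F. f s) ^ p + of_nat p * r'"
    using power_add_prime[OF p] by blast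
  then show ?case
    by (intro exI[of _ "r + r'"]) (simp add: insert r algebra_simps)
qed

lemma monomial_sum_power_prime:
  assumes p: "prime p" and S: "finite S"
  obtains R :: "int poly"
  where "\<And>z::complex. (\<Sum>s\<in>S. z ^ s) ^ p = (\<Sum>s\<in>S. z ^ (s * p)) + of_nat p * poly (of_int_poly R) z"
proof -
  obtain R where R: "(\<Sum>s\<in>S. Polynomial.monom 1 s) ^ p = (\<Sum>s\<in>S. Polynomial.monom (1::int) s ^ p) + of_nat p * R"
    using power_sum_prime[OF p S] by blast
  have "(\<Sum>s\<in>S. z ^ s) ^ p = (\<Sum>s\<in>S. z ^ (s * p)) + of_nat p * poly (of_int_poly R) z"
    for z :: complex
    using arg_cong[OF R, of "\<lambda>F. poly (of_int_poly F) z"]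
    by (simp add: of_int_poly_hom.hom_add of_int_poly_hom.hom_mult of_int_poly_hom.hom_power
        of_int_poly_hom.hom_sum poly_sum poly_power poly_monom power_mult of_int_poly_hom.hom_of_nat)
  then show ?thesis by (rule that)
qed

lemma sum_poly_zeta_Ints:
  assumes n: "n > 0"
  shows "(\<Sum>j<n. poly (of_int_poly F) (zeta n (int j))) \<in> \<int>"
proof -
  have "(\<Sum>j<n. poly (of_int_poly F) (zeta n (int j)))
      = (\<Sum>j<n. \<Sum>i\<le>degree F. of_int (Polynomial.coeff F i) * zeta n (int j) ^ i)"
    by (simp add: poly_altdef coeff_map_poly)
  also have "\<dots> = (\<Sum>i\<le>degree F. of_int (Polynomial.coeff F i) * (\<Sum>j<n. zeta n (int i) ^ j))"
    by (simp add: sum.swap[of _ "{..<n}"] sum_distrib_left zeta_power mult.commute)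
  also have "\<dots> \<in> \<int>"
  proof (rule Ints_sum, rule Ints_mult)
    show "(\<Sum>j<n. zeta n (int i) ^ j) \<in> \<int>" for i
      by (simp add: sum_gp_strict zeta_root_of_unity[OF n])
  qed simp
  finally show ?thesis .
qed

text \<open>With \<open>q = p\<^bsup>|A|+1\<^esup>\<close> and \<open>m = \<phi>(q)\<close>, Euler's theorem gives \<open>a x ^ m \<equiv> [p \<nmid> a x] (mod q)\<close>;
  so \<open>q\<close> divides the number of \<open>x\<close> with \<open>p \<nmid> a x\<close>, which is less than \<open>q\<close>.\<close>
lemma prime_dvd_if_power_sums_dvd:
  fixes a :: "'a \<Rightarrow> int"
  assumes p: "prime p" and A: "finite A" and x: "x \<in> A"
    and dvd: "\<And>m. int p ^ m dvd (\<Sum>y\<in>A. a y ^ m)"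
  shows "int p dvd a x"
proof -
  define N where "N = card A"
  define q where "q = int p ^ Suc N"
  define m where "m = p ^ N * (p - 1)"
  define B where "B = {y\<in>A. \<not> int p dvd a y}"
  have p2: "p \<ge> 2" using p prime_ge_2_nat by blast
  have "N < 2 ^ N" by (rule less_exp)
  also have "(2::nat) ^ N \<le> p ^ N" using p2 by (simp add: power_mono)
  finally have N_lt: "N < p ^ N" .
  have "p ^ N \<le> m" using p2 by (simp add: m_def)
  then have m_ge: "Suc N \<le> m" using N_lt by linarith
  have euler: "[a y ^ m = (if int p dvd a y then 0 else 1)] (mod q)" for y
  proof (cases "int p dvd a y")
    case True
    then have "q dvd a y ^ m" unfolding q_def using m_ge by (rule dvd_power_le)
    then show ?thesis using True by (simp add: cong_0_iff)
  next
    case False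
    have "coprime (a y) (int p)"
      using prime_imp_coprime[of "int p" "a y"] p False by (simp add: coprime_commute)
    then have "coprime (a y) q" by (simp add: q_def)
    moreover have "residues q"
      unfolding residues_def q_def by (rule one_less_power) (use p2 in auto)
    ultimately have "[a y ^ totient (nat q) = 1] (mod q)"
      by (intro residues.euler_theorem)
    moreover have "nat q = p ^ Suc N" unfolding q_def by (metis nat_int of_nat_power)
    then have "totient (nat q) = m"
      using totient_prime_power_Suc[OF p] by (simp add: m_def)
    ultimately show ?thesis using False by simp
  qed
  have "[(\<Sum>y\<in>A. a y ^ m) = (\<Sum>y\<in>A. if int p dvd a y then 0 else 1)] (mod q)"
    using euler by (intro cong_sum) auto
  moreover have "(\<Sum>y\<in>A. if int p dvd a y then 0 else 1::int) = int (card B)"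
  proof -
    have "(\<Sum>y\<in>B. 1::int) = (\<Sum>y\<in>A. if int p dvd a y then 0 else 1)"
      unfolding B_def using A by (subst sum.inter_filter) (auto intro: sum.cong)
    then show ?thesis by simp
  qed
  moreover have "q dvd (\<Sum>y\<in>A. a y ^ m)"
    using dvd[of m] dvd_trans le_imp_power_dvd[OF m_ge] unfolding q_def by blast
  ultimately have "q dvd int (card B)"
    using cong_dvd_iff by metis
  moreover have "int (card B) < q"
  proof -
    have "card B \<le> N" unfolding B_def N_def using A by (intro card_mono) auto
    also have "N < p ^ Suc N"
      using N_lt p2 power_increasing[of N "Suc N" p] by linarith
    finally show ?thesis unfolding q_def by (metis of_nat_less_iff of_nat_power)
  qed
  ultimately have "\<not> int (card B) > 0" using zdvd_imp_le not_le by blast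
  then show ?thesis using A x by (auto simp: B_def)
qed

lemma fermat_int:
  assumes p: "prime p"
  shows "[x ^ p = x] (mod int p)"
proof (cases "int p dvd x")
  case True
  then have "int p dvd x ^ p" using dvd_trans dvd_power prime_gt_0_nat[OF p] by blast
  then show ?thesis using True by (simp add: cong_iff_dvd_diff)
next
  case False
  have "coprime x (int p)"
    using prime_imp_coprime[of "int p" x] p False by (simp add: coprime_commute)
  moreover have "residues (int p)" unfolding residues_def using prime_gt_1_nat[OF p] by simp
  ultimately have "[x ^ totient (nat (int p)) = 1] (mod int p)"
    by (intro residues.euler_theorem)
  then have "[x ^ (p - 1) = 1] (mod int p)"
    by (simp add: totient_prime[OF p])
  then have "[x ^ (p - 1) * x = 1 * x] (mod int p)" by (rule cong_mult) simp
  moreover have "x ^ (p - 1) * x = x ^ p"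
    using prime_gt_0_nat[OF p] by (simp add: power_Suc2[symmetric])
  ultimately show ?thesis by simp
qed

text \<open>Over \<open>\<int>[\<zeta>]\<close> one has \<open>\<lambda>\<^sub>i\<^sup>p - \<lambda>\<^sub>p\<^sub>i = p R(\<zeta>\<^sup>i)\<close> with \<open>R \<in> \<int>[X]\<close>. To descend to \<open>\<int>\<close>, note that the
  power sums over \<open>i\<close> of these differences are \<open>p\<^sup>m\<close> times the traces \<open>\<Sum>\<^sub>i R\<^sup>m(\<zeta>\<^sup>i)\<close>, which are integers.\<close>
lemma circ_eigenvalue_frobenius_dvd:
  assumes n: "n > 0" and S: "finite S" and p: "prime p"
    and L: "\<And>j. circ_eigenvalue n S j = of_int (L j)" and i: "i < n"
  shows "int p dvd L (int i) ^ p - L (int p * int i)"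
proof -
  obtain R where R: "\<And>z::complex. (\<Sum>s\<in>S. z ^ s) ^ p = (\<Sum>s\<in>S. z ^ (s * p)) + of_nat p * poly (of_int_poly R) z"
    using monomial_sum_power_prime[OF p S] by blast
  define a where "a i = L (int i) ^ p - L (int p * int i)" for i
  have a: "of_int (a i) = of_nat p * poly (of_int_poly R) (zeta n (int i))" for i
    using R[of "zeta n (int i)"]
    by (simp add: a_def L[symmetric] circ_eigenvalue_def zeta_power mult_ac)
  have "int p dvd a i"
  proof (rule prime_dvd_if_power_sums_dvd[OF p _ lessThan_iff[THEN iffD2, OF i]])
    fix m
    obtain t where t: "(\<Sum>i<n. poly (of_int_poly (R ^ m)) (zeta n (int i))) = of_int t"
      using sum_poly_zeta_Ints[OF n, of "R ^ m"] by (auto elim: Ints_cases)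
    have "(of_int (\<Sum>i<n. a i ^ m) :: complex) = of_int (int p ^ m * t)"
      using t by (simp add: a power_mult_distrib sum_distrib_left[symmetric]
          of_int_poly_hom.hom_power poly_power)
    then have "(\<Sum>i<n. a i ^ m) = int p ^ m * t"
      by (simp only: of_int_eq_iff)
    then show "int p ^ m dvd (\<Sum>i<n. a i ^ m)" by simp
  qed simp
  then show ?thesis by (simp add: a_def)
qed

lemma circ_eigenvalue_frobenius_cong:
  assumes n: "n > 0" and S: "finite S" and p: "prime p"
    and L: "\<And>j. circ_eigenvalue n S j = of_int (L j)"
  shows "[L j ^ p = L (int p * j)] (mod int p)"
proof -
  define i where "i = nat (j mod int n)"
  then have i: "i < n" "int i = j mod int n"
    using n by (simp_all add: nat_less_iff)
  have L_mod: "L (k mod int n) = L k" for k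
    using circ_eigenvalue_mod[OF n, of S k] by (simp add: L)
  have "L (int p * int i) = L ((int p * int i) mod int n)"
    by (rule L_mod[symmetric])
  also have "\<dots> = L (int p * j)"
    using i(2) L_mod by (simp add: mod_mult_right_eq)
  finally have "L (int p * int i) = L (int p * j)" .
  moreover have "L (int i) = L j"
    using i(2) L_mod by simp
  ultimately show ?thesis
    using circ_eigenvalue_frobenius_dvd[OF n S p L i(1)] by (simp add: cong_iff_dvd_diff)
qed

lemma circ_eigenvalue_prime_mult:
  assumes n: "n > 0" and S: "finite S" and p: "prime p" and large: "2 * card S < p"
    and ints: "\<And>j. circ_eigenvalue n S j \<in> \<int>"
  shows "circ_eigenvalue n S (int p * j) = circ_eigenvalue n S j"
proof -
  define L where "L k = (SOME x. circ_eigenvalue n S k = of_int x)" for k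
  have L: "circ_eigenvalue n S k = of_int (L k)" for k
  proof -
    obtain x where "circ_eigenvalue n S k = of_int x" using ints[of k] by (rule Ints_cases)
    then show ?thesis unfolding L_def by (rule someI)
  qed
  have "[L j = L j ^ p] (mod int p)"
    by (rule cong_sym[OF fermat_int[OF p]])
  also have "[L j ^ p = L (int p * j)] (mod int p)"
    by (rule circ_eigenvalue_frobenius_cong[OF n S p L])
  finally have "int p dvd L j - L (int p * j)"
    by (simp add: cong_iff_dvd_diff)
  moreover have bound: "\<bar>L k\<bar> \<le> int (card S)" for k
    using norm_circ_eigenvalue_le[of n S k] by (simp add: L)
  have "\<not> \<bar>int p\<bar> \<le> \<bar>L j - L (int p * j)\<bar>"
    using bound[of j] bound[of "int p * j"] large by linarith
  ultimately have "L j - L (int p * j) = 0"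
    using dvd_imp_le_int by blast
  then show ?thesis by (simp add: L)
qed

lemma circ_eigenvalue_mult:
  assumes n: "n > 0" and S: "finite S" and ints: "\<And>j. circ_eigenvalue n S j \<in> \<int>"
    and N: "N > 0" and large: "\<And>q. prime q \<Longrightarrow> q dvd N \<Longrightarrow> 2 * card S < q"
  shows "circ_eigenvalue n S (int N * j) = circ_eigenvalue n S j"
  using N large
proof (induction N arbitrary: j rule: prime_divisors_induct)
  case (factor q N)
  then have "circ_eigenvalue n S (int q * (int N * j)) = circ_eigenvalue n S (int N * j)"
    by (intro circ_eigenvalue_prime_mult[OF n S _ _ ints]) auto
  also have "\<dots> = circ_eigenvalue n S j"
    using factor by (intro factor.IH) auto
  finally show ?case by (simp add: mult.assoc)
qed auto

lemma bij_betw_mult_mod: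
  fixes N n :: nat
  assumes "coprime N n"
  shows "bij_betw (\<lambda>j. N * j mod n) {..<n} {..<n}"
proof (cases "n = 0")
  case False
  have inj: "inj_on (\<lambda>j. N * j mod n) {..<n}"
  proof (rule inj_onI)
    fix a b assume "a \<in> {..<n}" "b \<in> {..<n}" and "N * a mod n = N * b mod n"
    then have "[N * a = N * b] (mod n)" by (simp add: cong_def)
    then have "[a = b] (mod n)" using cong_mult_lcancel_nat[OF assms] by simp
    then show "a = b" using \<open>a \<in> {..<n}\<close> \<open>b \<in> {..<n}\<close> by (simp add: cong_def)
  qed
  moreover have "(\<lambda>j. N * j mod n) ` {..<n} \<subseteq> {..<n}" using False by auto
  ultimately have "(\<lambda>j. N * j mod n) ` {..<n} = {..<n}"
    using card_image[OF inj] by (intro card_subset_eq) auto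
  then show ?thesis using inj by (simp add: bij_betw_def)
qed (simp add: bij_betw_def)

text \<open>Fourier inversion recovers the indicator of \<open>S\<close> from the eigenvalues, which are
  unchanged under \<open>j \<mapsto> N j\<close>.\<close>
lemma connection_set_mult_invariant:
  assumes n: "n > 0" and S: "S \<subseteq> {..<n}" and ints: "\<And>j. circ_eigenvalue n S j \<in> \<int>"
    and N: "N > 0" "coprime N n" and large: "\<And>q. prime q \<Longrightarrow> q dvd N \<Longrightarrow> 2 * card S < q"
  shows "nat ((int N * x) mod int n) \<in> S \<longleftrightarrow> nat (x mod int n) \<in> S"
proof -
  define g where "g t = circ_eigenvalue n S (int t) * zeta n (- (int t * x))" for t
  define h where "h j = N * j mod n" for j
  have "circ_eigenvalue n S (int j) * zeta n (- (int j * (int N * x))) = g (h j)" for j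
  proof -
    have hj: "int (h j) mod int n = (int N * int j) mod int n"
      by (simp add: h_def of_nat_mod)
    have "circ_eigenvalue n S (int (h j)) = circ_eigenvalue n S (int N * int j)"
      using circ_eigenvalue_mod[OF n, of S "int (h j)"] circ_eigenvalue_mod[OF n, of S "int N * int j"]
        hj by simp
    also have "\<dots> = circ_eigenvalue n S (int j)"
      by (rule circ_eigenvalue_mult[OF n finite_subset[OF S finite_lessThan] ints N(1) large])
    moreover have "(int N * int j * x) mod int n = (int (h j) * x) mod int n"
      using hj by (intro mod_mult_cong) simp_all
    then have "(- (int N * int j * x)) mod int n = (- (int (h j) * x)) mod int n"
      by (rule mod_minus_cong)
    then have "zeta n (- (int N * int j * x)) = zeta n (- (int (h j) * x))"
      by (rule zeta_cong[OF n])
    then have "zeta n (- (int j * (int N * x))) = zeta n (- (int (h j) * x))"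
      by (simp add: ac_simps)
    ultimately show ?thesis by (simp add: g_def)
  qed
  then have "(\<Sum>j<n. circ_eigenvalue n S (int j) * zeta n (- (int j * (int N * x))))
      = (\<Sum>j<n. g (h j))"
    by simp
  also have "\<dots> = (\<Sum>j<n. g j)"
    using bij_betw_mult_mod[OF N(2)] unfolding h_def by (rule sum.reindex_bij_betw)
  finally have "(if nat ((int N * x) mod int n) \<in> S then of_nat n else 0)
      = (if nat (x mod int n) \<in> S then (of_nat n :: complex) else 0)"
    using circ_eigenvalue_inversion[OF n S] by (simp add: g_def)
  then show ?thesis
    using n by (auto split: if_splits)
qed

text \<open>Adding to \<open>a\<close> a multiple of \<open>d\<close> times the product of all small primes not dividing \<open>a\<close>
  leaves only large prime factors.\<close>
lemma coprime_lift_large_prime_factors: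
  fixes a d n B :: nat
  assumes cop: "coprime a d" and n: "n > 0"
  obtains N where "N > 0" "[N = a] (mod d)" "coprime N n" "\<And>q. prime q \<Longrightarrow> q dvd N \<Longrightarrow> B < q"
proof -
  define M where "M = max B n"
  define Q where "Q = {q. prime q \<and> q \<le> M \<and> \<not> q dvd a}"
  define N where "N = a + d * \<Prod>Q"
  have Q: "finite Q" unfolding Q_def by simp
  have large: "M < q" if q: "prime q" "q dvd N" for q
  proof (rule ccontr)
    assume "\<not> M < q"
    show False
    proof (cases "q dvd a")
      case True
      then have "q dvd d * \<Prod>Q" using q(2) unfolding N_def by (simp add: dvd_add_right_iff)
      then have "q dvd d \<or> q dvd \<Prod>Q" using q(1) by (simp add: prime_dvd_mult_iff)
      moreover have "\<not> q dvd d"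
        using coprime_common_divisor[OF cop True] q(1) by auto
      moreover have "\<not> q dvd \<Prod>Q"
      proof
        assume "q dvd \<Prod>Q"
        then obtain r where r: "r \<in> Q" "q dvd r" using prime_dvd_prod_iff[OF Q q(1), of id] by auto
        then have "q = r" using q(1) by (intro primes_dvd_imp_eq) (auto simp: Q_def)
        then show False using r(1) True by (simp add: Q_def)
      qed
      ultimately show False by blast
    next
      case False
      then have "q \<in> Q" using q \<open>\<not> M < q\<close> by (simp add: Q_def)
      then have "q dvd d * \<Prod>Q" using dvd_prodI[OF Q, of q "\<lambda>x. x"] by simp
      then show False using False q(2) unfolding N_def by (simp add: dvd_add_left_iff)
    qed
  qed
  have "N > 0"
  proof (cases "d = 0")
    case True then show ?thesis using cop by (simp add: N_def)
  next
    case False then show ?thesis using Q by (simp add: N_def Q_def prime_gt_0_nat prod_pos)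
  qed
  moreover have "[N = a] (mod d)" by (simp add: N_def cong_def)
  moreover have "coprime N n"
  proof (rule ccontr)
    assume "\<not> coprime N n"
    then obtain q where q: "prime q" "q dvd gcd N n"
      using prime_factor_nat[of "gcd N n"] coprime_iff_gcd_eq_1 by blast
    then have "M < q" using large dvd_trans[OF q(2) gcd_dvd1] by blast
    moreover have "q \<le> n" using dvd_imp_le[OF dvd_trans[OF q(2) gcd_dvd2] n] .
    ultimately show False by (simp add: M_def)
  qed
  ultimately show ?thesis using large that by (simp add: M_def)
qed

lemma gcd_eq_imp_large_unit_multiplier:
  fixes n s t B :: nat
  assumes n: "n > 0" and t: "t < n" and gcd: "gcd t n = gcd s n"
  obtains N where "N > 0" "coprime N n" "\<And>q. prime q \<Longrightarrow> q dvd N \<Longrightarrow> B < q" "N * s mod n = t"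
proof -
  define g where "g = gcd s n"
  define d where "d = n div g"
  have n_eq: "n = g * d" unfolding d_def g_def by simp
  have s_eq: "s = g * (s div g)" unfolding g_def by simp
  have t_eq: "t = g * (t div g)" unfolding g_def using gcd[symmetric] by simp
  have "coprime (s div g) d"
    unfolding d_def g_def using n div_gcd_coprime[of s n] by simp
  then obtain x where x: "[s div g * x = 1] (mod d)"
    using cong_solve_coprime_nat by auto
  then have x': "[x * (s div g) = 1] (mod d)"
    by (simp add: mult.commute)
  then have "coprime x d"
    using coprime_iff_invertible_nat[of x d] by auto
  moreover have "coprime (t div g) d"
    unfolding d_def g_def using gcd n div_gcd_coprime[of t n] by simp
  ultimately have "coprime (t div g * x) d" by simp
  then obtain N where N: "N > 0" "[N = t div g * x] (mod d)" "coprime N n"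
    and large: "\<And>q. prime q \<Longrightarrow> q dvd N \<Longrightarrow> B < q"
    by (rule coprime_lift_large_prime_factors[where B = B, OF _ n]) blast
  have "[N * (s div g) = t div g * x * (s div g)] (mod d)"
    using N(2) by (rule cong_mult) simp
  also have "[t div g * x * (s div g) = t div g] (mod d)"
    using cong_mult[OF cong_refl[of "t div g"] x'] by (simp add: mult.assoc)
  finally have "g * (N * (s div g) mod d) = g * (t div g mod d)"
    by (simp add: cong_def)
  then have "g * (N * (s div g)) mod n = g * (t div g) mod n"
    unfolding n_eq by (simp only: mod_mult_mult1)
  then have "N * s mod n = t"
    using s_eq t_eq t by (metis mult.left_commute mod_less)
  then show ?thesis using that N(1,3) large by blast
qed

lemma connection_set_gcd_closed:
  assumes n: "n > 0" and S: "S \<subseteq> {..<n}" and ints: "\<And>j. circ_eigenvalue n S j \<in> \<int>"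
    and s: "s \<in> S" and t: "t < n" and gcd: "gcd t n = gcd s n"
  shows "t \<in> S"
proof -
  obtain N where N: "N > 0" "coprime N n" and large: "\<And>q. prime q \<Longrightarrow> q dvd N \<Longrightarrow> 2 * card S < q"
    and Ns: "N * s mod n = t"
    by (rule gcd_eq_imp_large_unit_multiplier[where B = "2 * card S", OF n t gcd]) blast
  have "int (N * s mod n) = (int N * int s) mod int n"
    by (simp add: of_nat_mod)
  then have "nat ((int N * int s) mod int n) = t"
    using Ns by simp
  moreover have "nat (int s mod int n) = s"
    using s S by auto
  ultimately show ?thesis
    using connection_set_mult_invariant[OF n S ints N large, of "int s"] s by simp
qed

lemma connected_circulant_imp_not_dvd:
  assumes n: "n > 0" and conn: "connected_circulant n S" and p: "prime p" "p dvd n"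
  shows "\<exists>s\<in>S. \<not> p dvd s"
proof (rule ccontr)
  assume "\<not> (\<exists>s\<in>S. \<not> p dvd s)"
  then have all: "\<forall>s\<in>S. p dvd s" by blast
  have adj_cong: "[i = j] (mod p)" if "circ_adj n S i j" for i j
  proof -
    define X where "X = (int i - int j) mod int n"
    have "nat X \<in> S" using that by (simp add: circ_adj_def X_def)
    then have "int p dvd int (nat X)" using all by (simp only: int_dvd_int_iff)
    moreover have "X \<ge> 0" using n by (simp add: X_def)
    ultimately have "X mod int p = 0" by simp
    moreover have "X mod int p = (int i - int j) mod int p"
      unfolding X_def using p(2) by (simp add: mod_mod_cancel)
    ultimately have "[int i = int j] (mod int p)"
      by (simp add: cong_iff_dvd_diff dvd_eq_mod_eq_0)
    then show ?thesis by (simp add: cong_int_iff)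
  qed
  have reach_cong: "[i = j] (mod p)" if "(circ_adj n S)\<^sup>*\<^sup>* i j" for i j
    using that
  proof (induction rule: rtranclp_induct)
    case (step y z)
    show ?case using step.IH adj_cong[OF step.hyps(2)] by (rule cong_trans)
  qed simp
  have "1 < n" using prime_gt_1_nat[OF p(1)] dvd_imp_le[OF p(2) n] by linarith
  then have "(circ_adj n S)\<^sup>*\<^sup>* 0 1" using conn unfolding connected_circulant_def by simp
  then have "[0 = 1] (mod p)" by (rule reach_cong)
  then show False using prime_gt_1_nat[OF p(1)] by (simp add: cong_def)
qed

lemma sum_le_prod_nat:
  fixes f :: "'a \<Rightarrow> nat"
  assumes "finite A" and "\<And>x. x \<in> A \<Longrightarrow> 2 \<le> f x"
  shows "sum f A \<le> prod f A"
  using assms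
proof (induction A rule: finite_induct)
  case (insert x F)
  have "f x + prod f F \<le> f x * prod f F" if "y \<in> F" for y
  proof -
    have "0 < prod f F" using insert.prems by (intro prod_pos) fastforce
    then have "f y \<le> prod f F"
      using insert.hyps(1) that by (intro dvd_imp_le dvd_prodI)
    then have "2 * prod f F \<le> f x * prod f F" "f x * 2 \<le> f x * prod f F"
      using insert.prems that by (auto intro: mult_le_mono order.trans)
    then show ?thesis by linarith
  qed
  then show ?case using insert by (cases "F = {}") auto
qed simp

lemma card_mult_card_le_sum:
  fixes A :: "nat set"
  assumes "finite A"
  shows "card A * card A \<le> 2 * \<Sum>A + card A"
  using assms
proof (induction "card A" arbitrary: A)
  case (Suc m)
  define M where "M = Max A"
  have "A \<noteq> {}" using Suc.hyps(2) by auto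
  then have M: "M \<in> A" using Suc.prems by (simp add: M_def)
  then have "card (A - {M}) = m" using Suc.hyps(2) Suc.prems by simp
  moreover have "card A \<le> card {..M}"
    using Suc.prems by (intro card_mono) (auto simp: M_def)
  moreover have "\<Sum>A = M + \<Sum>(A - {M})"
    using Suc.prems M by (simp add: sum.remove)
  moreover have "m * m \<le> 2 * \<Sum>(A - {M}) + m"
    using Suc.hyps(1)[of "A - {M}"] calculation Suc.prems by simp
  moreover have "card A * card A = m * m + 2 * m + 1"
    using Suc.hyps(2)[symmetric] by simp
  ultimately show ?case
    using Suc.hyps(2) by simp
qed simp

lemma sum_odd_prime_factors_le_totient:
  assumes d: "d > 0" and A: "A \<subseteq> prime_factors d" and odd: "2 \<notin> A"
  shows "(\<Sum>p\<in>A. p - 1) \<le> totient d"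
proof -
  have fin: "finite (prime_factors d)" by simp
  have "(\<Sum>p\<in>A. p - 1) \<le> (\<Prod>p\<in>A. p - 1)"
  proof (rule sum_le_prod_nat)
    show "finite A" using A fin finite_subset by blast
    fix p assume "p \<in> A"
    then have "prime p" "p \<noteq> 2" using A odd by auto
    then show "2 \<le> p - 1" using prime_ge_2_nat[of p] by linarith
  qed
  also have "\<dots> \<le> (\<Prod>p\<in>prime_factors d - A. p - 1) * (\<Prod>p\<in>A. p - 1)"
  proof -
    have "1 \<le> (\<Prod>p\<in>prime_factors d - A. p - 1)"
      by (intro prod_ge_1) (auto simp: Suc_le_eq dest!: in_prime_factors_imp_prime prime_gt_1_nat)
    then show ?thesis by simp
  qed
  also have "\<dots> = (\<Prod>p\<in>prime_factors d. p - 1)"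
    using prod.subset_diff[OF A fin, of "\<lambda>p. p - 1"] by simp
  also have "\<dots> \<le> (\<Prod>p\<in>prime_factors d. p ^ (multiplicity p d - 1) * (p - 1))"
    by (intro prod_mono) (simp add: prime_gt_0_nat)
  also have "\<dots> = totient d"
    using totient_formula1[OF d] by simp
  finally show ?thesis .
qed

definition gcd_class :: "nat \<Rightarrow> nat \<Rightarrow> nat set" where
  "gcd_class n g = {t\<in>{0<..n}. gcd t n = g}"

definition odd_prime_factors :: "nat \<Rightarrow> nat set" where
  "odd_prime_factors n = {p\<in>prime_factors n. p \<noteq> 2}"

lemma finite_odd_prime_factors: "finite (odd_prime_factors n)"
  by (simp add: odd_prime_factors_def)

lemma card_gcd_class: "n > 0 \<Longrightarrow> g dvd n \<Longrightarrow> card (gcd_class n g) = totient (n div g)"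
  unfolding gcd_class_def by (rule card_gcd_eq_totient)

locale gcd_closed_generating_set =
  fixes n :: nat and S :: "nat set"
  assumes n_pos: "n > 0"
    and subset: "S \<subseteq> {1..<n}"
    and gcd_closed: "\<And>s t. s \<in> S \<Longrightarrow> t < n \<Longrightarrow> gcd t n = gcd s n \<Longrightarrow> t \<in> S"
    and generating: "\<And>p. prime p \<Longrightarrow> p dvd n \<Longrightarrow> \<exists>s\<in>S. \<not> p dvd s"
begin

lemma finite_S: "finite S"
  using subset finite_subset by blast

lemma gcd_class_subset:
  assumes s: "s \<in> S"
  shows "gcd_class n (gcd s n) \<subseteq> S"
proof
  fix t assume "t \<in> gcd_class n (gcd s n)"
  then have t: "0 < t" "t \<le> n" "gcd t n = gcd s n" by (auto simp: gcd_class_def)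
  have "t \<noteq> n"
  proof
    assume "t = n"
    then have "n dvd s" using t(3) by (metis gcd_dvd1 gcd_nat.idem)
    then show False using s subset dvd_imp_le[of n s] by fastforce
  qed
  then show "t \<in> S" using gcd_closed[OF s _ t(3)] t(2) by simp
qed

lemma totient_le_card:
  assumes "s \<in> S"
  shows "totient (n div gcd s n) \<le> card S"
proof -
  have "card (gcd_class n (gcd s n)) \<le> card S"
    using card_mono[OF finite_S gcd_class_subset[OF assms]] .
  then show ?thesis by (simp add: card_gcd_class[OF n_pos])
qed

lemma prime_dvd_div_gcd:
  assumes p: "prime p" "p dvd n" and s: "\<not> p dvd s"
  shows "p dvd n div gcd s n"
proof -
  have "p dvd n div gcd s n * gcd s n" using p(2) by (metis dvd_div_mult_self gcd_dvd2)
  moreover have "\<not> p dvd gcd s n" using s dvd_trans gcd_dvd1 by blast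
  ultimately show ?thesis using prime_dvd_multD[OF p(1)] by blast
qed

text \<open>With \<open>s \<in> S\<close> prime to \<open>p\<close>, the prime power \<open>p\<^sup>e\<close> exactly dividing \<open>n\<close> divides
  \<open>n / gcd s n\<close>, so \<open>p\<^sup>e \<le> 2 \<phi>(p\<^sup>e) \<le> 2 \<phi>(n / gcd s n) \<le> 2 |S|\<close>.\<close>
lemma prime_power_le:
  assumes "p \<in> prime_factors n"
  shows "p ^ multiplicity p n \<le> 2 * card S"
proof -
  define e where "e = multiplicity p n"
  have p: "prime p" "p dvd n" and e: "e > 0"
    using assms n_pos by (auto simp: in_prime_factors_iff e_def prime_multiplicity_gt_zero_iff)
  obtain s where s: "s \<in> S" "\<not> p dvd s" using generating[OF p] by blast
  have "coprime (p ^ e) (gcd s n)"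
    using s(2) p(1) by (metis coprime_commute dvd_trans gcd_dvd1 prime_imp_power_coprime)
  then have "p ^ e dvd n div gcd s n"
    using multiplicity_dvd[of p n] by (metis coprime_dvd_mult_left_iff dvd_div_mult_self gcd_dvd2 e_def)
  moreover have "n div gcd s n > 0"
    using n_pos by (simp add: div_greater_zero_iff)
  ultimately have "totient (p ^ e) \<le> totient (n div gcd s n)"
    by (rule totient_dvd_mono)
  then have "totient (p ^ e) \<le> card S"
    using totient_le_card[OF s(1)] by linarith
  moreover have "p ^ e \<le> 2 * totient (p ^ e)"
  proof -
    have "p ^ e = p ^ (e - 1) * p" using e by (metis Suc_diff_1 power_Suc2)
    also have "\<dots> \<le> p ^ (e - 1) * (2 * (p - 1))"
      using prime_ge_2_nat[OF p(1)] by (intro mult_le_mono2) linarith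
    finally show ?thesis using totient_prime_power[OF p(1) e] by simp
  qed
  ultimately show ?thesis unfolding e_def by linarith
qed


text \<open>Each odd \<open>p | n\<close> divides \<open>n / g\<close> for some \<open>g\<close> in the set \<open>G\<close> of values of \<open>gcd s n\<close>, \<open>s \<in> S\<close>,
  and the gcd classes of \<open>G\<close> are disjoint subsets of \<open>S\<close>.\<close>
lemma sum_odd_prime_factors_le: "(\<Sum>p\<in>(odd_prime_factors n). p - 1) \<le> card S"
proof -
  define G where "G = (\<lambda>s. gcd s n) ` S"
  have G: "finite G" "\<And>g. g \<in> G \<Longrightarrow> g dvd n \<and> n div g > 0"
    using finite_S n_pos by (auto simp: G_def div_greater_zero_iff gcd_le2_nat)
  have "(\<Sum>p\<in>(odd_prime_factors n). p - 1)
      \<le> (\<Sum>p\<in>(odd_prime_factors n). \<Sum>g\<in>G. if p dvd n div g then p - 1 else 0)"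
  proof (rule sum_mono)
    fix p assume "p \<in> (odd_prime_factors n)"
    then have p: "prime p" "p dvd n" by (auto simp: odd_prime_factors_def)
    then obtain s where "s \<in> S" "\<not> p dvd s" using generating by blast
    then have "gcd s n \<in> G" "p dvd n div gcd s n"
      using prime_dvd_div_gcd[OF p] by (auto simp: G_def)
    moreover have "(if p dvd n div gcd s n then p - 1 else 0)
        \<le> (\<Sum>g\<in>G. if p dvd n div g then p - 1 else 0)"
      by (rule member_le_sum[OF \<open>gcd s n \<in> G\<close> _ G(1)]) simp
    ultimately show "p - 1 \<le> (\<Sum>g\<in>G. if p dvd n div g then p - 1 else 0)"
      by simp
  qed
  also have "\<dots> = (\<Sum>g\<in>G. \<Sum>p\<in>(odd_prime_factors n). if p dvd n div g then p - 1 else 0)"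
    by (rule sum.swap)
  also have "\<dots> = (\<Sum>g\<in>G. \<Sum>p\<in>{p\<in>(odd_prime_factors n). p dvd n div g}. p - 1)"
    by (rule sum.cong[OF refl], rule sum.inter_filter[symmetric, OF finite_odd_prime_factors])
  also have "\<dots> \<le> (\<Sum>g\<in>G. card (gcd_class n g))"
  proof (rule sum_mono)
    fix g assume "g \<in> G"
    then have g: "g dvd n" "n div g > 0" using G(2) by auto
    have "(\<Sum>p\<in>{p\<in>(odd_prime_factors n). p dvd n div g}. p - 1) \<le> totient (n div g)"
      by (rule sum_odd_prime_factors_le_totient[OF g(2)])
        (use g(2) in \<open>auto simp: odd_prime_factors_def in_prime_factors_iff\<close>)
    then show "(\<Sum>p\<in>{p\<in>(odd_prime_factors n). p dvd n div g}. p - 1) \<le> card (gcd_class n g)"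
      using card_gcd_class[OF n_pos g(1)] by simp
  qed
  also have "\<dots> = card (\<Union>g\<in>G. gcd_class n g)"
    using G(1) by (intro card_UN_disjoint[symmetric]) (auto simp: gcd_class_def)
  also have "\<dots> \<le> card S"
    using gcd_class_subset by (intro card_mono[OF finite_S]) (auto simp: G_def)
  finally show ?thesis .
qed

lemma card_odd_prime_factors_bound:
  "card (odd_prime_factors n) * card (odd_prime_factors n) \<le> 2 * card S + card (odd_prime_factors n)"
proof -
  have inj: "inj_on (\<lambda>p. p - 1) (odd_prime_factors n)"
    by (rule inj_onI) (auto simp: odd_prime_factors_def in_prime_factors_iff dest!: prime_gt_0_nat)
  then have "card ((\<lambda>p. p - 1) ` (odd_prime_factors n)) = card (odd_prime_factors n)"
    by (rule card_image)
  moreover have "\<Sum>((\<lambda>p. p - 1) ` (odd_prime_factors n)) = (\<Sum>p\<in>(odd_prime_factors n). p - 1)"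
    by (rule sum.reindex_cong[OF inj refl]) simp
  moreover have "card ((\<lambda>p. p - 1) ` (odd_prime_factors n)) * card ((\<lambda>p. p - 1) ` (odd_prime_factors n))
      \<le> 2 * \<Sum>((\<lambda>p. p - 1) ` (odd_prime_factors n)) + card ((\<lambda>p. p - 1) ` (odd_prime_factors n))"
    using finite_odd_prime_factors by (intro card_mult_card_le_sum) simp
  ultimately show ?thesis
    using sum_odd_prime_factors_le by simp
qed

lemma le_power_card_odd_prime_factors:
  assumes "S \<noteq> {}"
  shows "n \<le> (2 * card S) ^ (card (odd_prime_factors n) + 1)"
proof -
  have "n = (\<Prod>p\<in>prime_factors n. p ^ multiplicity p n)"
    using prime_factorization_nat[OF n_pos] .
  also have "\<dots> \<le> (\<Prod>p\<in>prime_factors n. 2 * card S)"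
    using prime_power_le by (intro prod_mono) auto
  also have "\<dots> = (2 * card S) ^ card (prime_factors n)"
    by simp
  also have "\<dots> \<le> (2 * card S) ^ (card (odd_prime_factors n) + 1)"
  proof (rule power_increasing)
    have "prime_factors n \<subseteq> insert 2 (odd_prime_factors n)"
      by (auto simp: odd_prime_factors_def)
    then have "card (prime_factors n) \<le> card (insert 2 (odd_prime_factors n))"
      by (rule card_mono[rotated]) (simp add: odd_prime_factors_def)
    then show "card (prime_factors n) \<le> card (odd_prime_factors n) + 1"
      by (simp add: card_insert_if odd_prime_factors_def split: if_splits)
    show "1 \<le> 2 * card S"
      using assms finite_S by (simp add: Suc_leI card_gt_0_iff)
  qed
  finally show ?thesis .
qed

end

lemma one_minus_inverse_le_ln:
  fixes x :: real
  assumes "0 < x"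
  shows "1 - 1 / x \<le> ln x"
proof -
  have "ln (inverse x) \<le> inverse x - 1"
    using assms by (intro ln_le_minus_one) simp
  then show ?thesis
    using assms by (simp add: ln_inverse divide_inverse)
qed

lemma ln_ln_ge:
  assumes "k \<ge> (2::nat)"
  shows "1 / 5 \<le> ln (ln (real k + 2))"
proof -
  have "1 \<le> ln (3::real)"
    using exp_le by (subst ln_ge_iff) auto
  moreover have "1 / 4 \<le> ln (4 / 3 :: real)"
    using one_minus_inverse_le_ln[of "4 / 3"] by simp
  moreover have "ln (4::real) = ln 3 + ln (4 / 3)"
    by (simp add: ln_div)
  moreover have "ln (4::real) \<le> ln (real k + 2)"
    using assms by simp
  ultimately have "5 / 4 \<le> ln (real k + 2)"
    by linarith
  then have "ln (5 / 4) \<le> ln (ln (real k + 2))"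
    by (rule ln_mono) simp
  moreover have "1 / 5 \<le> ln (5 / 4 :: real)"
    using one_minus_inverse_le_ln[of "5 / 4"] by simp
  ultimately show ?thesis by linarith
qed

lemma power_le_exp_sqrt_ln_ln:
  fixes k r :: nat
  assumes k: "k \<ge> 2" and r: "r * r \<le> 2 * k + r"
  shows "real ((2 * k) ^ (r + 1)) \<le> exp (30 * sqrt (real k * ln (ln (real k + 2))) * ln (real k))"
proof -
  define L where "L = ln (ln (real k + 2))"
  have sqrt_k: "1 \<le> sqrt (real k)" and ln_k: "0 \<le> ln (real k)"
    using k by simp_all
  have "real (r * r) \<le> real (2 * k + r)"
    using r by (simp only: of_nat_le_iff)
  then have "real r * real r \<le> 2 * real k + real r"
    by simp
  moreover have "(real r - 1)\<^sup>2 = real r * real r - 2 * real r + 1"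
    by (simp add: power2_eq_square algebra_simps)
  ultimately have "(real r - 1)\<^sup>2 \<le> 2 * real k"
    using k by (cases "r = 0") simp_all
  then have "real r - 1 \<le> sqrt (2 * real k)"
    by (rule real_le_rsqrt)
  moreover have "sqrt (2 * real k) \<le> sqrt (2\<^sup>2 * real k)"
    by (intro real_sqrt_le_mono) simp
  moreover have "sqrt (2\<^sup>2 * real k) = 2 * sqrt (real k)"
    unfolding real_sqrt_mult real_sqrt_abs by simp
  ultimately have r_le: "real r + 1 \<le> 4 * sqrt (real k)"
    using sqrt_k by linarith
  have "ln (2 * real k) \<le> ln (real k ^ 2)"
    using k by (intro ln_mono) (simp_all add: power2_eq_square)
  then have ln_2k: "ln (2 * real k) \<le> 2 * ln (real k)"
    by (simp add: ln_realpow)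
  have "real k * (1 / 5) \<le> real k * L"
    unfolding L_def using ln_ln_ge[OF k] by (intro mult_left_mono) simp_all
  then have "sqrt (real k) \<le> sqrt (3\<^sup>2 * (real k * L))"
    by (intro real_sqrt_le_mono) simp
  then have sqrt_le: "sqrt (real k) \<le> 3 * sqrt (real k * L)"
    unfolding real_sqrt_mult real_sqrt_abs by simp
  have "ln (real ((2 * k) ^ (r + 1))) = ln ((2 * real k) ^ (r + 1))"
    by simp
  also have "\<dots> = (real r + 1) * ln (2 * real k)"
    by (simp only: ln_realpow) simp
  also have "\<dots> \<le> (4 * sqrt (real k)) * (2 * ln (real k))"
    using r_le ln_2k k by (intro mult_mono) simp_all
  also have "\<dots> = (8 * sqrt (real k)) * ln (real k)"
    by simp
  also have "\<dots> \<le> (30 * sqrt (real k * L)) * ln (real k)"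
    using sqrt_le sqrt_k ln_k by (intro mult_right_mono) linarith+
  finally have "exp (ln (real ((2 * k) ^ (r + 1)))) \<le> exp (30 * sqrt (real k * L) * ln (real k))"
    by simp
  then show ?thesis
    using k by (simp add: L_def)
qed

theorem theorem2:
  shows "\<exists>c::real. c > 0 \<and>
    (\<forall>k::nat. k \<ge> 2 \<longrightarrow>
      (\<forall>(n::nat) (S::nat set). n \<ge> 1 \<and> circulant_set n S \<and> card S = k \<and>
          connected_circulant n S \<and> integral_circulant n S \<longrightarrow>
          real n \<le> exp (c * sqrt (real k * ln (ln (real k + 2))) * ln (real k))))"
proof (rule exI[of _ 30], intro conjI allI impI)
  fix k n :: nat and S :: "nat set"
  assume k: "k \<ge> 2"
    and H: "n \<ge> 1 \<and> circulant_set n S \<and> card S = k \<and> connected_circulant n S \<and> integral_circulant n S"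
  then have n: "n > 0" and S: "S \<subseteq> {1..<n}" and card_S: "card S = k"
    by (auto simp: circulant_set_def)
  have "S \<subseteq> {..<n}" using S by auto
  then have ints: "circ_eigenvalue n S j \<in> \<int>" for j
    using H eigenvalue_circ_adj_mat[OF n] by (auto simp: integral_circulant_def)
  interpret gcd_closed_generating_set n S
  proof
    show "t \<in> S" if "s \<in> S" "t < n" "gcd t n = gcd s n" for s t
      using connection_set_gcd_closed[OF n \<open>S \<subseteq> {..<n}\<close> ints that] .
    show "\<exists>s\<in>S. \<not> p dvd s" if "prime p" "p dvd n" for p
      using connected_circulant_imp_not_dvd[OF n _ that] H by blast
  qed (use n S in auto)
  have "S \<noteq> {}" using k card_S by auto
  then have "real n \<le> real ((2 * k) ^ (card (odd_prime_factors n) + 1))"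
    using le_power_card_odd_prime_factors card_S by (simp only: of_nat_le_iff) simp
  also have "\<dots> \<le> exp (30 * sqrt (real k * ln (ln (real k + 2))) * ln (real k))"
    using card_odd_prime_factors_bound card_S by (intro power_le_exp_sqrt_ln_ln[OF k]) simp
  finally show "real n \<le> exp (30 * sqrt (real k * ln (ln (real k + 2))) * ln (real k))" .
qed simp

end
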